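(* In the location mixture model, let $F$ be any probability distribution on $\mathcal M$ (possibly with infinite support) and let $P^\star$ have density $p^\star=\int_{\mathcal M}\gamma(\cdot;m)\,dF(m)$. If $P^\star\notin\Pi_K$, then $H(P^\star|\Pi_{K+1})<H(P^\star|\Pi_K)$.
   Context: Location mixture model: $\sigma>0$ is known, $\gamma(\cdot;m)$ is the density (w.r.t. Lebesgue measure on $\mathbb R$) of the normal distribution with mean $m$ and variance $\sigma^2$, and $\mathcal M\subset\mathbb R$ is compact. $\Theta_1=\mathcal M$ and $p_\theta=\gamma(\cdot;\theta)$; for $K\ge2$, $\Theta_K=\{(\pi,\mathbf m):\pi\in[0,\infty)^{K-1},\sum_{k<K}\pi_k\le1,\ \mathbf m\in\mathcal M^K\}$, and $P_\theta$ has density $p_\theta=\sum_{k=1}^{K-1}\pi_k\gamma(\cdot;m_k)+(1-\sum_{k<K}\pi_k)\gamma(\cdot;m_K)$. $\Pi_K=\{P_\theta:\theta\in\Theta_K\}$. $H(P|Q)=\int\log(dP/dQ)\,dP$ if $P\ll Q$, $+\infty$ otherwise; $H(P|\Pi)=\inf_{Q\in\Pi}H(P|Q)$. *)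

theory Defs
  imports "HOL-Probability.Probability"
begin

definition gam :: "real \<Rightarrow> real \<Rightarrow> real \<Rightarrow> real" where
  "gam \<sigma> m x = normal_density m \<sigma> x"

definition mix_density :: "real \<Rightarrow> nat \<Rightarrow> (nat \<Rightarrow> real) \<Rightarrow> (nat \<Rightarrow> real) \<Rightarrow> real \<Rightarrow> real" where
  "mix_density \<sigma> K w m x =
     (\<Sum>k<K - 1. w k * gam \<sigma> (m k) x) + (1 - (\<Sum>k<K - 1. w k)) * gam \<sigma> (m (K - 1)) x"

definition Theta :: "real set \<Rightarrow> nat \<Rightarrow> ((nat \<Rightarrow> real) \<times> (nat \<Rightarrow> real)) set" where
  "Theta Ms K = {(w, m). (\<forall>k<K - 1. 0 \<le> w k) \<and> (\<Sum>k<K - 1. w k) \<le> 1 \<and> (\<forall>k<K. m k \<in> Ms)}"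

definition Pi_model :: "real \<Rightarrow> real set \<Rightarrow> nat \<Rightarrow> real measure set" where
  "Pi_model \<sigma> Ms K = {density lborel (mix_density \<sigma> K w m) | w m. (w, m) \<in> Theta Ms K}"

text \<open>Relative entropy H(P|Q) = int log(dP/dQ) dP if P << Q, +infinity otherwise.
  The integral is taken in the extended reals as (positive part) - (negative part).\<close>
definition rel_entropy :: "real measure \<Rightarrow> real measure \<Rightarrow> ereal" where
  "rel_entropy P Q =
    (if absolutely_continuous Q P then
       enn2ereal (\<integral>\<^sup>+ x. ennreal (max 0 (ln (enn2real (RN_deriv Q P x)))) \<partial>P)
       - enn2ereal (\<integral>\<^sup>+ x. ennreal (max 0 (- ln (enn2real (RN_deriv Q P x)))) \<partial>P)
     else \<infinity>)"

definition rel_entropy_set :: "real measure \<Rightarrow> real measure set \<Rightarrow> ereal" where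
  "rel_entropy_set P Qs = (INF Q\<in>Qs. rel_entropy P Q)"

definition pstar :: "real \<Rightarrow> real measure \<Rightarrow> real \<Rightarrow> real" where
  "pstar \<sigma> F x = (\<integral> m. gam \<sigma> m x \<partial>F)"

end

theory Submission
  imports Defs
begin

(* Up to the constant int p* ln p*, the relative entropy H(P*|Q) of a mixture Q with density q
   is minus the expected log-likelihood L(q) = int p* ln q.  Gaussian envelopes, uniform in the
   means ranging over the compact set M, dominate p* ln q for every mixture q, so by compactness
   of the parameter set and dominated convergence L attains its maximum over Pi_K at some q.
   If p* /= q, then int p*^2/q > 1 (chi-square), and since p* is itself the F-average of the
   gamma(.; mu), some mu in M has D = int p* (gamma(.; mu)/q - 1) > 0.  Moving a small weight t
   to a new component at mu gives a (K+1)-mixture whose log-likelihood exceeds L(q) by at least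
   t D - 2 t^2 V > 0, using ln (1 + u) >= u - 2 u^2 for u >= -1/2. *)

lemma integrable_exp_abs_quadratic:
  fixes a d b :: real
  assumes "b > 0"
  shows "integrable lborel (\<lambda>x. exp (a * \<bar>x\<bar> + d - b * x\<^sup>2))"
proof -
  define s where "s = 1 / sqrt b"
  have s: "s > 0" "s\<^sup>2 = 1 / b" using assms by (auto simp: s_def power_divide)
  have gauss: "exp (- (b / 2) * x\<^sup>2) = sqrt (2 * pi * s\<^sup>2) * normal_density 0 s x" for x
    using s assms by (simp add: normal_density_def field_simps)
  have am_gm: "a * \<bar>x\<bar> \<le> b / 2 * x\<^sup>2 + a\<^sup>2 / (2 * b)" for x
  proof -
    have "0 \<le> (b * \<bar>x\<bar> - a)\<^sup>2 / (2 * b)" using assms by simp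
    also have "\<dots> = b / 2 * x\<^sup>2 + a\<^sup>2 / (2 * b) - a * \<bar>x\<bar>"
      using assms by (simp add: field_simps power2_eq_square)
    finally show ?thesis by simp
  qed
  have bound: "norm (exp (a * \<bar>x\<bar> + d - b * x\<^sup>2))
      \<le> norm (exp (a\<^sup>2 / (2 * b) + d) * (sqrt (2 * pi * s\<^sup>2) * normal_density 0 s x))" for x
  proof -
    have "exp (a * \<bar>x\<bar> + d - b * x\<^sup>2) \<le> exp ((a\<^sup>2 / (2 * b) + d) + - (b / 2) * x\<^sup>2)"
      using am_gm[of x] by simp
    also have "\<dots> = exp (a\<^sup>2 / (2 * b) + d) * (sqrt (2 * pi * s\<^sup>2) * normal_density 0 s x)"
      by (simp only: exp_add gauss)
    finally show ?thesis by simp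
  qed
  show ?thesis
    by (rule Bochner_Integration.integrable_bound[OF _ _ AE_I2[OF bound]])
       (simp_all add: s(1))
qed

lemma square_le_four_exp:
  fixes t :: real
  assumes "0 \<le> t"
  shows "t\<^sup>2 \<le> 4 * exp t"
proof -
  have "t / 2 \<le> exp (t / 2)" using exp_ge_add_one_self[of "t / 2"] by linarith
  then have "(t / 2)\<^sup>2 \<le> (exp (t / 2))\<^sup>2" using assms by (intro power_mono) auto
  also have "(exp (t / 2))\<^sup>2 = exp t" by (simp add: power2_eq_square mult_exp_exp)
  finally show ?thesis by (simp add: power_divide)
qed

lemma ln_one_plus_ge_quadratic:
  fixes u :: real
  assumes "-1/2 \<le> u"
  shows "u - 2 * u\<^sup>2 \<le> ln (1 + u)"
proof -
  have pos: "0 < 1 + u" using assms by linarith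
  have "u - 2 * u\<^sup>2 \<le> 1 - 1 / (1 + u)"
  proof -
    have "0 \<le> u\<^sup>2 * (1 + 2 * u) / (1 + u)" using pos assms by simp
    also have "\<dots> = 1 - 1 / (1 + u) - (u - 2 * u\<^sup>2)"
      using pos by (simp add: field_simps power2_eq_square)
    finally show ?thesis by simp
  qed
  also have "1 - 1 / (1 + u) \<le> ln (1 + u)"
    using ln_le_minus_one[of "1 / (1 + u)"] pos by (simp add: ln_div)
  finally show ?thesis .
qed

lemma ln_add_component_ge:
  fixes q g t :: real
  assumes "0 < q" and "0 \<le> g" and "0 \<le> t" and "t \<le> 1/2"
  shows "t * (g / q - 1) - 2 * t\<^sup>2 * (g / q - 1)\<^sup>2 \<le> ln ((1 - t) * q + t * g) - ln q"
proof -
  define u where "u = t * (g / q - 1)"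
  have "- t \<le> u"
    unfolding u_def using assms mult_left_mono[of "-1" "g / q - 1" t] by simp
  then have u: "-1/2 \<le> u" using assms(4) by linarith
  have "(1 - t) * q + t * g = q * (1 + u)"
    using assms(1) by (simp add: u_def field_simps)
  then have "ln ((1 - t) * q + t * g) - ln q = ln (1 + u)"
    using assms(1) u by (simp add: ln_mult)
  then show ?thesis
    using ln_one_plus_ge_quadratic[OF u] by (simp add: u_def power_mult_distrib)
qed

lemma seq_compact_finite_coordinates:
  fixes f :: "nat \<Rightarrow> nat \<Rightarrow> 'a::metric_space"
  assumes "compact S" and "\<And>n k. k < N \<Longrightarrow> f n k \<in> S"
  shows "\<exists>r l. strict_mono r \<and> (\<forall>k<N. l k \<in> S \<and> (\<lambda>n. f (r n) k) \<longlonglongrightarrow> l k)"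
  using assms(2)
proof (induction N)
  case 0
  show ?case using strict_mono_id by blast
next
  case (Suc N)
  then obtain r l where r: "strict_mono r" and l: "\<forall>k<N. l k \<in> S \<and> (\<lambda>n. f (r n) k) \<longlonglongrightarrow> l k"
    by auto
  have "\<forall>n. f (r n) N \<in> S" using Suc.prems by auto
  from seq_compactE[OF compact_imp_seq_compact[OF assms(1)] this]
  obtain l' r' where l': "l' \<in> S" "strict_mono r'" "((\<lambda>n. f (r n) N) \<circ> r') \<longlonglongrightarrow> l'"
    by blast
  have "(\<lambda>n. f (r (r' n)) k) \<longlonglongrightarrow> l k" if "k < N" for k
    using LIMSEQ_subseq_LIMSEQ[OF conjunct2[OF l[rule_format, OF that]] l'(2)] by (simp add: comp_def)
  then have "\<forall>k<Suc N. (l(N := l')) k \<in> S \<and> (\<lambda>n. f ((r \<circ> r') n) k) \<longlonglongrightarrow> (l(N := l')) k"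
    using l l' by (auto simp: less_Suc_eq comp_def)
  then show ?case using strict_mono_o[OF r l'(2)] by blast
qed

section \<open>Relative entropy between densities\<close>

lemma AE_RN_deriv_density_density:
  fixes M :: "'a measure" and p f :: "'a \<Rightarrow> real"
  assumes [measurable]: "p \<in> borel_measurable M" "f \<in> borel_measurable M"
    and p_nonneg: "\<And>x. 0 \<le> p x" and f_pos: "\<And>x. 0 < f x"
    and "sigma_finite_measure (density M f)"
  shows "AE x in M. RN_deriv (density M f) (density M p) x = ennreal (p x / f x)"
proof -
  interpret Q: sigma_finite_measure "density M f" by fact
  have "ennreal (f x) * ennreal (p x / f x) = ennreal (p x)" for x
    using f_pos[of x] p_nonneg[of x] by (simp add: ennreal_mult[symmetric])
  then have dens: "density (density M f) (\<lambda>x. ennreal (p x / f x)) = density M p"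
    by (simp add: density_density_eq)
  have "AE x in density M f. ennreal (p x / f x) = RN_deriv (density M f) (density M p) x"
    by (rule Q.RN_deriv_unique[OF _ dens]) measurable
  then have "AE x in M. 0 < ennreal (f x) \<longrightarrow> ennreal (p x / f x) = RN_deriv (density M f) (density M p) x"
    by (subst (asm) AE_density) simp_all
  then show ?thesis
    by eventually_elim (use f_pos in simp)
qed

lemma rel_entropy_density_density:
  fixes M :: "real measure" and p f :: "real \<Rightarrow> real"
  assumes [measurable]: "p \<in> borel_measurable M" "f \<in> borel_measurable M"
    and p_pos: "\<And>x. 0 < p x" and f_pos: "\<And>x. 0 < f x"
    and f_prob: "(\<integral>\<^sup>+x. f x \<partial>M) = 1"
    and int_p: "integrable M (\<lambda>x. p x * ln (p x))" and int_f: "integrable M (\<lambda>x. p x * ln (f x))"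
  shows "rel_entropy (density M p) (density M f)
    = ereal ((\<integral>x. p x * ln (p x) \<partial>M) - (\<integral>x. p x * ln (f x) \<partial>M))"
proof -
  define \<phi> where "\<phi> x = p x * ln (p x) - p x * ln (f x)" for x
  have int_\<phi>: "integrable M \<phi>"
    unfolding \<phi>_def[abs_def] using int_p int_f by (rule Bochner_Integration.integrable_diff)
  have \<phi>_eq: "p x * ln (p x / f x) = \<phi> x" for x
    using p_pos[of x] f_pos[of x] by (simp add: \<phi>_def ln_div algebra_simps)
  have ac: "absolutely_continuous (density M f) (density M p)"
    unfolding absolutely_continuous_def
  proof
    fix A assume "A \<in> null_sets (density M f)"
    then have A: "A \<in> sets M" "AE x in M. x \<in> A \<longrightarrow> ennreal (f x) = 0"
      by (simp_all add: null_sets_density_iff)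
    from A(2) have "AE x in M. x \<in> A \<longrightarrow> ennreal (p x) = 0"
      by eventually_elim (metis f_pos ennreal_eq_0_iff not_le)
    with A(1) show "A \<in> null_sets (density M p)"
      by (simp add: null_sets_density_iff)
  qed
  have "prob_space (density M f)"
    by (rule prob_spaceI) (simp add: emeasure_density f_prob)
  then have RN: "AE x in M. RN_deriv (density M f) (density M p) x = ennreal (p x / f x)"
    by (intro AE_RN_deriv_density_density[OF _ _ less_imp_le[OF p_pos] f_pos]
        prob_space_imp_sigma_finite) measurable
  have part: "(\<integral>\<^sup>+x. ennreal (max 0 (s * ln (enn2real (RN_deriv (density M f) (density M p) x))))
      \<partial>density M p) = (\<integral>\<^sup>+x. ennreal (s * \<phi> x) \<partial>M)" for s
  proof -
    have "(\<integral>\<^sup>+x. ennreal (max 0 (s * ln (enn2real (RN_deriv (density M f) (density M p) x))))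
        \<partial>density M p)
      = (\<integral>\<^sup>+x. ennreal (p x) * ennreal (max 0 (s * ln (enn2real (RN_deriv (density M f) (density M p) x)))) \<partial>M)"
      by (rule nn_integral_density) measurable
    also have "\<dots> = (\<integral>\<^sup>+x. ennreal (s * \<phi> x) \<partial>M)"
    proof (rule nn_integral_cong_AE)
      show "AE x in M. ennreal (p x) * ennreal (max 0 (s * ln (enn2real (RN_deriv (density M f) (density M p) x))))
          = ennreal (s * \<phi> x)"
        using RN
      proof eventually_elim
        case (elim x)
        have "ennreal (p x) * ennreal (s * ln (p x / f x)) = ennreal (p x * (s * ln (p x / f x)))"
          using p_pos[of x] by (simp add: ennreal_mult')
        also have "p x * (s * ln (p x / f x)) = s * \<phi> x"
          by (metis \<phi>_eq mult.left_commute)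
        finally show ?case
          using elim p_pos[of x] f_pos[of x] by (simp add: ennreal_max_0)
      qed
    qed
    finally show ?thesis .
  qed
  have "rel_entropy (density M p) (density M f)
      = enn2ereal (\<integral>\<^sup>+x. ennreal (\<phi> x) \<partial>M) - enn2ereal (\<integral>\<^sup>+x. ennreal (- \<phi> x) \<partial>M)"
    unfolding rel_entropy_def using ac part[of 1] part[of "-1"] by simp
  also have "\<dots> = ereal (\<integral>x. \<phi> x \<partial>M)"
  proof -
    have finite: "enn2ereal A = ereal (enn2real A)" if "A \<noteq> \<top>" for A :: ennreal
      using that by (metis enn2ereal_ennreal enn2real_nonneg ennreal_enn2real top.not_eq_extremum)
    show ?thesis
      using int_\<phi> unfolding real_lebesgue_integral_def[OF int_\<phi>] real_integrable_def
      by (simp add: finite)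
  qed
  finally show ?thesis
    unfolding \<phi>_def using int_p int_f by simp
qed

lemma AE_eq_if_nn_integral_square_div_le_1:
  fixes M :: "'a measure" and p q :: "'a \<Rightarrow> real"
  assumes [measurable]: "p \<in> borel_measurable M" "q \<in> borel_measurable M"
    and p_nonneg: "\<And>x. 0 \<le> p x" and q_pos: "\<And>x. 0 < q x"
    and p_prob: "(\<integral>\<^sup>+x. p x \<partial>M) = 1" and q_prob: "(\<integral>\<^sup>+x. q x \<partial>M) = 1"
    and le_1: "(\<integral>\<^sup>+x. ennreal (p x * p x / q x) \<partial>M) \<le> 1"
  shows "AE x in M. p x = q x"
proof -
  define X where "X = (\<integral>\<^sup>+x. ennreal ((p x - q x)\<^sup>2 / q x) \<partial>M)"
  have pointwise: "ennreal ((p x - q x)\<^sup>2 / q x) + ennreal (2 * p x)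
      = ennreal (p x * p x / q x) + ennreal (q x)" for x
  proof -
    have "(p x - q x)\<^sup>2 / q x + 2 * p x = p x * p x / q x + q x"
      using q_pos[of x] by (simp add: field_simps power2_eq_square)
    then show ?thesis
      using p_nonneg[of x] q_pos[of x] by (simp add: ennreal_plus[symmetric] del: ennreal_plus)
  qed
  have "(\<integral>\<^sup>+x. ennreal (2 * p x) \<partial>M) = 2"
    using p_prob p_nonneg by (simp add: ennreal_mult nn_integral_cmult)
  then have "X + 2 = (\<integral>\<^sup>+x. ennreal ((p x - q x)\<^sup>2 / q x) + ennreal (2 * p x) \<partial>M)"
    unfolding X_def by (subst nn_integral_add) auto
  also have "\<dots> = (\<integral>\<^sup>+x. ennreal (p x * p x / q x) \<partial>M) + 1"
    unfolding pointwise using q_prob by (subst nn_integral_add) auto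
  also have "\<dots> \<le> 2 + 0"
    using le_1 by (simp add: add_right_mono one_add_one[symmetric] del: one_add_one)
  finally have "X = 0"
    by (subst (asm) add.commute) (simp add: ennreal_add_left_cancel_le)
  then have "AE x in M. ennreal ((p x - q x)\<^sup>2 / q x) = 0"
    unfolding X_def by (subst (asm) nn_integral_0_iff_AE) auto
  then show ?thesis
  proof eventually_elim
    case (elim x)
    then have "(p x - q x)\<^sup>2 \<le> 0"
      using q_pos[of x] by (simp add: divide_le_0_iff)
    then show ?case by simp
  qed
qed

section \<open>Gaussian mixture densities\<close>

lemma gam_eq: "gam \<sigma> m x = 1 / sqrt (2 * pi * \<sigma>\<^sup>2) * exp (- (x - m)\<^sup>2 / (2 * \<sigma>\<^sup>2))"
  by (simp add: gam_def normal_density_def)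

lemma gam_pos: "0 < \<sigma> \<Longrightarrow> 0 < gam \<sigma> m x"
  by (simp add: gam_def normal_density_pos)

lemma gam_measurable [measurable]: "gam \<sigma> m \<in> borel_measurable borel"
  unfolding gam_def[abs_def] by simp

lemma tendsto_gam:
  assumes "0 < \<sigma>" and "a \<longlonglongrightarrow> b"
  shows "(\<lambda>n. gam \<sigma> (a n) x) \<longlonglongrightarrow> gam \<sigma> b x"
  unfolding gam_eq using assms by (intro tendsto_intros) auto

lemma mix_density_measurable [measurable]: "mix_density \<sigma> K w m \<in> borel_measurable borel"
  unfolding mix_density_def[abs_def] by measurable

lemma has_bochner_integral_mix_density:
  assumes "0 < \<sigma>"
  shows "has_bochner_integral lborel (mix_density \<sigma> K w m) 1"
proof -
  have gam: "has_bochner_integral lborel (gam \<sigma> \<mu>) 1" for \<mu>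
    using assms by (simp add: has_bochner_integral_iff gam_def[abs_def])
  have "has_bochner_integral lborel (mix_density \<sigma> K w m)
      ((\<Sum>k<K - 1. w k * 1) + (1 - (\<Sum>k<K - 1. w k)) * 1)"
    unfolding mix_density_def[abs_def]
    by (intro has_bochner_integral_add has_bochner_integral_sum has_bochner_integral_mult_right gam)
  then show ?thesis by simp
qed

lemma mix_density_bounds:
  assumes "1 \<le> K" and "(w, m) \<in> Theta Ms K"
    and lower: "\<And>\<mu>. \<mu> \<in> Ms \<Longrightarrow> a \<le> gam \<sigma> \<mu> x"
    and upper: "\<And>\<mu>. \<mu> \<in> Ms \<Longrightarrow> gam \<sigma> \<mu> x \<le> b"
  shows "a \<le> mix_density \<sigma> K w m x" "mix_density \<sigma> K w m x \<le> b"
proof -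
  define W where "W = (\<Sum>k<K - 1. w k)"
  have w: "\<And>k. k < K - 1 \<Longrightarrow> 0 \<le> w k" "W \<le> 1" and m: "\<And>k. k < K \<Longrightarrow> m k \<in> Ms"
    using assms(2) by (auto simp: Theta_def W_def)
  have last: "m (K - 1) \<in> Ms" using m assms(1) by simp
  have "a = (\<Sum>k<K - 1. w k * a) + (1 - W) * a"
    by (simp add: W_def flip: sum_distrib_right) (simp add: algebra_simps)
  also have "\<dots> \<le> mix_density \<sigma> K w m x"
    unfolding mix_density_def W_def[symmetric] using w m lower last
    by (intro add_mono sum_mono mult_left_mono) auto
  finally show "a \<le> mix_density \<sigma> K w m x" .
  have "mix_density \<sigma> K w m x \<le> (\<Sum>k<K - 1. w k * b) + (1 - W) * b"
    unfolding mix_density_def W_def[symmetric] using w m upper last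
    by (intro add_mono sum_mono mult_left_mono) auto
  also have "\<dots> = b"
    by (simp add: W_def flip: sum_distrib_right) (simp add: algebra_simps)
  finally show "mix_density \<sigma> K w m x \<le> b" .
qed

lemma mix_density_Suc_add_component:
  assumes "1 \<le> K" and "(w, m) \<in> Theta Ms K" and "\<mu> \<in> Ms" and "0 \<le> t" "t \<le> 1"
  obtains w' m' where "(w', m') \<in> Theta Ms (Suc K)"
    and "\<And>x. mix_density \<sigma> (Suc K) w' m' x = (1 - t) * mix_density \<sigma> K w m x + t * gam \<sigma> \<mu> x"
proof -
  obtain K' where K': "K = Suc K'" using assms(1) by (cases K) auto
  define W where "W = (\<Sum>k<K'. w k)"
  have w: "\<And>k. k < K' \<Longrightarrow> 0 \<le> w k" "W \<le> 1" and m: "\<And>k. k < K \<Longrightarrow> m k \<in> Ms"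
    using assms(2) by (auto simp: Theta_def K' W_def)
  txt \<open>Theta leaves the weight of the last component implicit: the old last component K'
    now gets the explicit weight (1 - t) * (1 - W), and the new component \<mu>, placed last,
    receives the implicit weight t.\<close>
  define w' where "w' k = (if k < K' then (1 - t) * w k else (1 - t) * (1 - W))" for k
  define m' where "m' k = (if k < K then m k else \<mu>)" for k
  have "(\<Sum>k<K'. w' k) = (1 - t) * W"
    by (simp add: w'_def W_def sum_distrib_left)
  then have sum_w': "(\<Sum>k<K. w' k) = 1 - t"
    by (simp add: K' w'_def algebra_simps)
  show ?thesis
  proof
    show "(w', m') \<in> Theta Ms (Suc K)"
      using sum_w' w m assms by (auto simp: Theta_def w'_def m'_def K' less_Suc_eq)
    have "(\<Sum>k<K. w' k * gam \<sigma> (m' k) x) = (1 - t) * mix_density \<sigma> K w m x" for x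
    proof -
      have "(\<Sum>k<K. w' k * gam \<sigma> (m' k) x)
          = (\<Sum>k<K'. (1 - t) * (w k * gam \<sigma> (m k) x)) + (1 - t) * ((1 - W) * gam \<sigma> (m K') x)"
        by (simp add: K' w'_def m'_def mult.assoc)
      also have "\<dots> = (1 - t) * mix_density \<sigma> K w m x"
        by (simp add: mix_density_def K' W_def sum_distrib_left distrib_left)
      finally show ?thesis .
    qed
    then show "mix_density \<sigma> (Suc K) w' m' x = (1 - t) * mix_density \<sigma> K w m x + t * gam \<sigma> \<mu> x" for x
      by (simp add: mix_density_def sum_w' m'_def)
  qed
qed

lemma Theta_subseq_mix_density_tendsto:
  fixes ws ms :: "nat \<Rightarrow> nat \<Rightarrow> real"
  assumes "0 < \<sigma>" and "1 \<le> K" and "compact Ms" and \<theta>: "\<And>n. (ws n, ms n) \<in> Theta Ms K"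
  obtains r w m where "strict_mono r" and "(w, m) \<in> Theta Ms K"
    and "\<And>x. (\<lambda>n. mix_density \<sigma> K (ws (r n)) (ms (r n)) x) \<longlonglongrightarrow> mix_density \<sigma> K w m x"
proof -
  have ws_nonneg: "\<And>n k. k < K - 1 \<Longrightarrow> 0 \<le> ws n k"
    and ws_sum: "\<And>n. (\<Sum>k<K - 1. ws n k) \<le> 1"
    and ms_in: "\<And>n k. k < K \<Longrightarrow> ms n k \<in> Ms"
    using \<theta> by (auto simp: Theta_def)
  have "ws n k \<in> {0..1}" if "k < K - 1" for n k
    using member_le_sum[of k "{..<K - 1}" "ws n"] ws_nonneg[OF that] ws_nonneg ws_sum[of n] that
    by auto
  then obtain r1 w where r1: "strict_mono r1"
    and w: "\<forall>k<K - 1. w k \<in> {0..1} \<and> (\<lambda>n. ws (r1 n) k) \<longlonglongrightarrow> w k"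
    using seq_compact_finite_coordinates[of "{0..1}" "K - 1" ws] by auto
  obtain r2 m where r2: "strict_mono r2"
    and m: "\<forall>k<K. m k \<in> Ms \<and> (\<lambda>n. ms (r1 (r2 n)) k) \<longlonglongrightarrow> m k"
    using seq_compact_finite_coordinates[OF assms(3), of K "\<lambda>n. ms (r1 n)"] ms_in by auto
  have w_lim: "(\<lambda>n. ws (r1 (r2 n)) k) \<longlonglongrightarrow> w k" if "k < K - 1" for k
    using LIMSEQ_subseq_LIMSEQ[OF conjunct2[OF w[rule_format, OF that]] r2] by (simp add: comp_def)
  have "(\<lambda>n. \<Sum>k<K - 1. ws (r1 (r2 n)) k) \<longlonglongrightarrow> (\<Sum>k<K - 1. w k)"
    by (intro tendsto_sum w_lim) simp
  then have "(\<Sum>k<K - 1. w k) \<le> 1"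
    using ws_sum by (intro LIMSEQ_le_const2) auto
  then have "(w, m) \<in> Theta Ms K"
    using w m by (auto simp: Theta_def)
  moreover have "(\<lambda>n. mix_density \<sigma> K (ws (r1 (r2 n))) (ms (r1 (r2 n))) x) \<longlonglongrightarrow> mix_density \<sigma> K w m x"
    for x
    unfolding mix_density_def using assms(1,2) m
    by (intro tendsto_intros tendsto_sum tendsto_gam w_lim) auto
  ultimately show ?thesis
    using that strict_mono_o[OF r1 r2] by (simp add: comp_def)
qed

section \<open>Expected log-likelihood in the location mixture model\<close>

locale location_mixture =
  fixes \<sigma> R :: real and Ms :: "real set" and F :: "real measure"
  assumes sigma_pos: "0 < \<sigma>" and Ms_bounded: "\<And>\<mu>. \<mu> \<in> Ms \<Longrightarrow> \<bar>\<mu>\<bar> \<le> R"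
    and Ms_compact: "compact Ms"
    and F_prob: "prob_space F" and sets_F: "sets F = sets borel" and F_Ms: "emeasure F Ms = 1"
begin

sublocale F: prob_space F by (rule F_prob)

abbreviation "p \<equiv> pstar \<sigma> F"

definition "peak = 1 / sqrt (2 * pi * \<sigma>\<^sup>2)"
definition "lower_env x = peak * exp (- (\<bar>x\<bar> + R)\<^sup>2 / (2 * \<sigma>\<^sup>2))"
definition "upper_env x = peak * exp ((2 * R * \<bar>x\<bar> - x\<^sup>2) / (2 * \<sigma>\<^sup>2))"

lemma peak_pos: "0 < peak"
  using sigma_pos by (simp add: peak_def)

lemma lower_env_pos: "0 < lower_env x"
  using peak_pos by (simp add: lower_env_def)

lemma gam_le_peak: "gam \<sigma> \<mu> x \<le> peak"
  unfolding gam_eq peak_def by (intro mult_left_le) auto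

lemma lower_env_le_gam:
  assumes "\<mu> \<in> Ms"
  shows "lower_env x \<le> gam \<sigma> \<mu> x"
proof -
  have "\<bar>x - \<mu>\<bar> \<le> \<bar>x\<bar> + R" using Ms_bounded[OF assms] by linarith
  then have "(x - \<mu>)\<^sup>2 \<le> (\<bar>x\<bar> + R)\<^sup>2" by (metis abs_ge_zero power2_abs power_mono)
  then have "- (\<bar>x\<bar> + R)\<^sup>2 / (2 * \<sigma>\<^sup>2) \<le> - (x - \<mu>)\<^sup>2 / (2 * \<sigma>\<^sup>2)"
    by (intro divide_right_mono) simp_all
  then show ?thesis
    unfolding lower_env_def gam_eq peak_def[symmetric] using peak_pos by (intro mult_left_mono) auto
qed

lemma gam_le_upper_env:
  assumes "\<mu> \<in> Ms"
  shows "gam \<sigma> \<mu> x \<le> upper_env x"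
proof -
  have "x * \<mu> \<le> R * \<bar>x\<bar>"
    using abs_ge_self[of "x * \<mu>"] mult_left_mono[OF Ms_bounded[OF assms] abs_ge_zero[of x]]
    by (simp add: abs_mult mult.commute)
  moreover have "- (x - \<mu>)\<^sup>2 = 2 * (x * \<mu>) - x\<^sup>2 - \<mu>\<^sup>2"
    by (simp add: power2_eq_square algebra_simps)
  ultimately have "- (x - \<mu>)\<^sup>2 \<le> 2 * R * \<bar>x\<bar> - x\<^sup>2"
    using zero_le_power2[of \<mu>] by linarith
  then have "- (x - \<mu>)\<^sup>2 / (2 * \<sigma>\<^sup>2) \<le> (2 * R * \<bar>x\<bar> - x\<^sup>2) / (2 * \<sigma>\<^sup>2)"
    by (rule divide_right_mono) simp
  then show ?thesis
    unfolding upper_env_def gam_eq peak_def[symmetric] using peak_pos by (intro mult_left_mono) auto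
qed

lemma AE_F_Ms: "AE \<mu> in F. \<mu> \<in> Ms"
  using F_Ms F.AE_prob_1 by (simp add: F.emeasure_eq_measure)

lemma gam_measurable_pair: "(\<lambda>(x, \<mu>). gam \<sigma> \<mu> x) \<in> borel_measurable (lborel \<Otimes>\<^sub>M F)"
proof -
  have [measurable_cong]: "sets F = sets borel" by (rule sets_F)
  show ?thesis unfolding gam_def normal_density_def by measurable
qed

lemma gam_measurable_F [measurable]: "(\<lambda>\<mu>. gam \<sigma> \<mu> x) \<in> borel_measurable F"
  using measurable_Pair2[OF gam_measurable_pair] by simp

lemma integrable_F_gam: "integrable F (\<lambda>\<mu>. gam \<sigma> \<mu> x)"
  using gam_le_peak gam_pos[OF sigma_pos]
  by (intro F.integrable_const_bound[where B = peak]) (auto simp: less_imp_le)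

lemma pstar_measurable [measurable]: "p \<in> borel_measurable borel"
  using F.borel_measurable_lebesgue_integral[OF gam_measurable_pair]
  by (simp add: pstar_def[abs_def])

lemma pstar_ge:
  assumes "\<And>\<mu>. \<mu> \<in> Ms \<Longrightarrow> a \<le> gam \<sigma> \<mu> x"
  shows "a \<le> p x"
proof -
  have "a = (\<integral>\<mu>. a \<partial>F)" by (simp add: F.prob_space)
  also have "\<dots> \<le> p x"
    unfolding pstar_def using AE_F_Ms assms
    by (intro integral_mono_AE integrable_F_gam) (auto elim!: AE_mp)
  finally show ?thesis .
qed

lemma pstar_le:
  assumes "\<And>\<mu>. \<mu> \<in> Ms \<Longrightarrow> gam \<sigma> \<mu> x \<le> b"
  shows "p x \<le> b"
proof -
  have "p x \<le> (\<integral>\<mu>. b \<partial>F)"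
    unfolding pstar_def using AE_F_Ms assms
    by (intro integral_mono_AE integrable_F_gam) (auto elim!: AE_mp)
  then show ?thesis by (simp add: F.prob_space)
qed

lemma lower_env_le_pstar: "lower_env x \<le> p x"
  by (rule pstar_ge) (rule lower_env_le_gam)

lemma pstar_le_upper_env: "p x \<le> upper_env x"
  by (rule pstar_le) (rule gam_le_upper_env)

lemma pstar_le_peak: "p x \<le> peak"
  by (rule pstar_le) (rule gam_le_peak)

lemma pstar_pos: "0 < p x"
  using lower_env_pos lower_env_le_pstar by (rule less_le_trans)

lemma nn_integral_F_gam: "(\<integral>\<^sup>+\<mu>. gam \<sigma> \<mu> x \<partial>F) = p x"
  unfolding pstar_def using integrable_F_gam gam_pos[OF sigma_pos]
  by (intro nn_integral_eq_integral) (auto simp: less_imp_le)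

sublocale lborel_F: pair_sigma_finite lborel F
  by (intro pair_sigma_finite.intro lborel.sigma_finite_measure_axioms F.sigma_finite_measure_axioms)

lemma nn_integral_pstar: "(\<integral>\<^sup>+x. p x \<partial>lborel) = 1"
proof -
  have "(\<integral>\<^sup>+x. p x \<partial>lborel) = (\<integral>\<^sup>+x. (\<integral>\<^sup>+\<mu>. gam \<sigma> \<mu> x \<partial>F) \<partial>lborel)"
    by (simp add: nn_integral_F_gam)
  also have "\<dots> = (\<integral>\<^sup>+\<mu>. (\<integral>\<^sup>+x. gam \<sigma> \<mu> x \<partial>lborel) \<partial>F)"
    by (rule lborel_F.Fubini'[symmetric]) (use gam_measurable_pair in measurable)
  also have "\<dots> = 1"
    using sigma_pos by (simp add: gam_def nn_integral_eq_integral F.emeasure_space_1)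
  finally show ?thesis .
qed

lemma has_bochner_integral_pstar: "has_bochner_integral lborel p 1"
  using nn_integral_pstar pstar_pos
  by (intro has_bochner_integral_nn_integral) (auto simp: less_imp_le)

lemma R_nonneg: "0 \<le> R"
proof -
  obtain \<mu> where "\<mu> \<in> Ms" using F_Ms by fastforce
  then show ?thesis using Ms_bounded[of \<mu>] by linarith
qed

lemma abs_ln_le:
  assumes "lower_env x \<le> y" and "y \<le> peak"
  shows "\<bar>ln y\<bar> \<le> (\<bar>ln peak\<bar> + 2 / \<sigma>\<^sup>2) * exp (\<bar>x\<bar> + R)"
proof -
  have "ln (lower_env x) \<le> ln y" "ln y \<le> ln peak"
    using assms lower_env_pos[of x] by simp_all
  moreover have "ln (lower_env x) = ln peak - (\<bar>x\<bar> + R)\<^sup>2 / (2 * \<sigma>\<^sup>2)"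
    using peak_pos by (simp add: lower_env_def ln_mult)
  moreover have "0 \<le> (\<bar>x\<bar> + R)\<^sup>2 / (2 * \<sigma>\<^sup>2)" by simp
  ultimately have "\<bar>ln y\<bar> \<le> \<bar>ln peak\<bar> + (\<bar>x\<bar> + R)\<^sup>2 / (2 * \<sigma>\<^sup>2)"
    using abs_ge_self[of "ln peak"] abs_ge_minus_self[of "ln peak"] unfolding abs_le_iff by linarith
  also have "\<dots> \<le> \<bar>ln peak\<bar> + 2 / \<sigma>\<^sup>2 * exp (\<bar>x\<bar> + R)"
    using square_le_four_exp[of "\<bar>x\<bar> + R"] R_nonneg sigma_pos
    by (simp add: field_simps)
  also have "\<dots> \<le> (\<bar>ln peak\<bar> + 2 / \<sigma>\<^sup>2) * exp (\<bar>x\<bar> + R)"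
    using mult_left_mono[of 1 "exp (\<bar>x\<bar> + R)" "\<bar>ln peak\<bar>"] R_nonneg by (simp add: distrib_right)
  finally show ?thesis .
qed

definition "ln_dominator x
  = peak * (\<bar>ln peak\<bar> + 2 / \<sigma>\<^sup>2) * exp ((R / \<sigma>\<^sup>2 + 1) * \<bar>x\<bar> + R - 1 / (2 * \<sigma>\<^sup>2) * x\<^sup>2)"

lemma integrable_ln_dominator: "integrable lborel ln_dominator"
  unfolding ln_dominator_def[abs_def] using sigma_pos
  by (intro Bochner_Integration.integrable_mult_right integrable_exp_abs_quadratic) simp

lemma abs_pstar_mult_ln_le:
  assumes "lower_env x \<le> y" and "y \<le> peak"
  shows "\<bar>p x * ln y\<bar> \<le> ln_dominator x"
proof -
  have "\<bar>p x * ln y\<bar> = p x * \<bar>ln y\<bar>"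
    using pstar_pos[of x] by (simp add: abs_mult)
  also have "\<dots> \<le> upper_env x * ((\<bar>ln peak\<bar> + 2 / \<sigma>\<^sup>2) * exp (\<bar>x\<bar> + R))"
    using abs_ln_le[OF assms] pstar_le_upper_env[of x] pstar_pos[of x]
    by (intro mult_mono) auto
  also have "\<dots> = ln_dominator x"
  proof -
    have exponent: "(2 * R * \<bar>x\<bar> - x\<^sup>2) / (2 * \<sigma>\<^sup>2) + (\<bar>x\<bar> + R)
        = (R / \<sigma>\<^sup>2 + 1) * \<bar>x\<bar> + R - 1 / (2 * \<sigma>\<^sup>2) * x\<^sup>2"
      using sigma_pos by (simp add: field_simps)
    show ?thesis
      unfolding upper_env_def ln_dominator_def exponent[symmetric] exp_add by (simp only: mult_ac)
  qed
  finally show ?thesis .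
qed

lemma integrable_pstar_mult_ln:
  assumes [measurable]: "f \<in> borel_measurable borel"
    and "\<And>x. lower_env x \<le> f x" and "\<And>x. f x \<le> peak"
  shows "integrable lborel (\<lambda>x. p x * ln (f x))"
  using abs_pstar_mult_ln_le[OF assms(2,3)]
  by (intro Bochner_Integration.integrable_bound[OF integrable_ln_dominator _ AE_I2])
     (auto intro: order_trans[OF _ abs_ge_self])

context
  fixes K w m
  assumes K: "1 \<le> K" and \<theta>: "(w, m) \<in> Theta Ms K"
begin

lemma lower_env_le_mix_density: "lower_env x \<le> mix_density \<sigma> K w m x"
  using mix_density_bounds[OF K \<theta> lower_env_le_gam gam_le_peak] by blast

lemma mix_density_le_peak: "mix_density \<sigma> K w m x \<le> peak"
  using mix_density_bounds[OF K \<theta> lower_env_le_gam gam_le_peak] by blast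

lemma mix_density_pos: "0 < mix_density \<sigma> K w m x"
  using lower_env_pos lower_env_le_mix_density by (rule less_le_trans)

lemma nn_integral_mix_density: "(\<integral>\<^sup>+x. mix_density \<sigma> K w m x \<partial>lborel) = 1"
  using has_bochner_integral_mix_density[OF sigma_pos] mix_density_pos
  by (simp add: has_bochner_integral_iff nn_integral_eq_integral less_imp_le)

lemma integrable_pstar_mult_ln_mix_density:
  "integrable lborel (\<lambda>x. p x * ln (mix_density \<sigma> K w m x))"
  using lower_env_le_mix_density mix_density_le_peak by (intro integrable_pstar_mult_ln) simp_all

end

definition loglik :: "nat \<Rightarrow> (nat \<Rightarrow> real) \<Rightarrow> (nat \<Rightarrow> real) \<Rightarrow> real" where
  "loglik K w m = (\<integral>x. p x * ln (mix_density \<sigma> K w m x) \<partial>lborel)"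

lemma rel_entropy_mix_density:
  assumes "1 \<le> K" and "(w, m) \<in> Theta Ms K"
  shows "rel_entropy (density lborel p) (density lborel (mix_density \<sigma> K w m))
    = ereal ((\<integral>x. p x * ln (p x) \<partial>lborel) - loglik K w m)"
proof -
  have "integrable lborel (\<lambda>x. p x * ln (p x))"
    using lower_env_le_pstar pstar_le_peak by (intro integrable_pstar_mult_ln) simp_all
  then show ?thesis
    unfolding loglik_def
    using pstar_pos mix_density_pos[OF assms] nn_integral_mix_density[OF assms]
      integrable_pstar_mult_ln_mix_density[OF assms]
    by (intro rel_entropy_density_density) auto
qed

lemma loglik_le_ln_peak:
  assumes "1 \<le> K" and "(w, m) \<in> Theta Ms K"
  shows "loglik K w m \<le> ln peak"
proof -
  have "loglik K w m \<le> (\<integral>x. p x * ln peak \<partial>lborel)"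
    unfolding loglik_def
    using integrable_pstar_mult_ln_mix_density[OF assms] has_bochner_integral_pstar
      mix_density_le_peak[OF assms] mix_density_pos[OF assms] pstar_pos peak_pos
    by (intro integral_mono) (auto simp: has_bochner_integral_iff intro!: mult_left_mono)
  also have "\<dots> = ln peak"
    using has_bochner_integral_pstar by (simp add: has_bochner_integral_iff)
  finally show ?thesis .
qed

lemma loglik_tendsto:
  assumes K: "1 \<le> K" and \<theta>: "\<And>n. (ws n, ms n) \<in> Theta Ms K" "(w, m) \<in> Theta Ms K"
    and lim: "\<And>x. (\<lambda>n. mix_density \<sigma> K (ws n) (ms n) x) \<longlonglongrightarrow> mix_density \<sigma> K w m x"
  shows "(\<lambda>n. loglik K (ws n) (ms n)) \<longlonglongrightarrow> loglik K w m"
  unfolding loglik_def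
proof (rule integral_dominated_convergence[where w = ln_dominator])
  show "AE x in lborel. (\<lambda>n. p x * ln (mix_density \<sigma> K (ws n) (ms n) x))
      \<longlonglongrightarrow> p x * ln (mix_density \<sigma> K w m x)"
    using mix_density_pos[OF K \<theta>(2)]
    by (intro AE_I2 tendsto_mult_left tendsto_ln lim) (simp add: less_imp_neq[symmetric])
  show "AE x in lborel. norm (p x * ln (mix_density \<sigma> K (ws n) (ms n) x)) \<le> ln_dominator x" for n
    using abs_pstar_mult_ln_le lower_env_le_mix_density[OF K \<theta>(1)] mix_density_le_peak[OF K \<theta>(1)]
    by (intro AE_I2) simp
qed (simp_all add: integrable_ln_dominator)

lemma loglik_attains_max:
  assumes K: "1 \<le> K"
  obtains w m where "(w, m) \<in> Theta Ms K"
    and "\<And>w' m'. (w', m') \<in> Theta Ms K \<Longrightarrow> loglik K w' m' \<le> loglik K w m"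
proof -
  define S where "S = (\<lambda>(w, m). loglik K w m) ` Theta Ms K"
  obtain \<mu> where "\<mu> \<in> Ms" using F_Ms by fastforce
  then have "((\<lambda>_. 0), (\<lambda>_. \<mu>)) \<in> Theta Ms K" by (simp add: Theta_def)
  then have "S \<noteq> {}" by (auto simp: S_def)
  moreover have bdd: "bdd_above S"
    unfolding S_def using loglik_le_ln_peak[OF K] by (intro bdd_aboveI) auto
  ultimately have "Sup S \<in> closure S" by (rule closure_contains_Sup)
  then obtain y where y: "\<And>n. y n \<in> S" and y_lim: "y \<longlonglongrightarrow> Sup S"
    unfolding closure_sequential by blast
  have "\<exists>\<theta>\<in>Theta Ms K. loglik K (fst \<theta>) (snd \<theta>) = y n" for n
    using y[of n] by (auto simp: S_def split_beta intro: bexI[of _ "(_, _)"])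
  then obtain \<theta> where \<theta>: "\<And>n. \<theta> n \<in> Theta Ms K" and \<theta>_y: "\<And>n. loglik K (fst (\<theta> n)) (snd (\<theta> n)) = y n"
    by metis
  obtain r w m where r: "strict_mono r" and wm: "(w, m) \<in> Theta Ms K"
    and lim: "\<And>x. (\<lambda>n. mix_density \<sigma> K (fst (\<theta> (r n))) (snd (\<theta> (r n))) x) \<longlonglongrightarrow> mix_density \<sigma> K w m x"
    using Theta_subseq_mix_density_tendsto[OF sigma_pos K Ms_compact, of "\<lambda>n. fst (\<theta> n)" "\<lambda>n. snd (\<theta> n)"] \<theta>
    by auto
  have "(\<lambda>n. loglik K (fst (\<theta> (r n))) (snd (\<theta> (r n)))) \<longlonglongrightarrow> loglik K w m"
    using \<theta> by (intro loglik_tendsto[OF K _ wm lim]) simp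
  moreover have "(\<lambda>n. loglik K (fst (\<theta> (r n))) (snd (\<theta> (r n)))) \<longlonglongrightarrow> Sup S"
    using LIMSEQ_subseq_LIMSEQ[OF y_lim r] by (simp add: \<theta>_y comp_def)
  ultimately have "loglik K w m = Sup S" by (rule LIMSEQ_unique)
  then show ?thesis
    using that[OF wm] cSup_upper[OF _ bdd] by (auto simp: S_def)
qed

lemma gam_div_lower_env_le:
  assumes "\<mu> \<in> Ms"
  shows "gam \<sigma> \<mu> x / lower_env x \<le> exp ((4 * R * \<bar>x\<bar> + R\<^sup>2) / (2 * \<sigma>\<^sup>2))"
proof -
  have "x * \<mu> \<le> R * \<bar>x\<bar>"
    using abs_ge_self[of "x * \<mu>"] mult_left_mono[OF Ms_bounded[OF assms] abs_ge_zero[of x]]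
    by (simp add: abs_mult mult.commute)
  moreover have "(\<bar>x\<bar> + R)\<^sup>2 - (x - \<mu>)\<^sup>2 = 2 * (R * \<bar>x\<bar>) + R\<^sup>2 + 2 * (x * \<mu>) - \<mu>\<^sup>2"
    by (simp add: power2_eq_square algebra_simps)
  ultimately have "(\<bar>x\<bar> + R)\<^sup>2 - (x - \<mu>)\<^sup>2 \<le> 4 * R * \<bar>x\<bar> + R\<^sup>2"
    using zero_le_power2[of \<mu>] by linarith
  then have "((\<bar>x\<bar> + R)\<^sup>2 - (x - \<mu>)\<^sup>2) / (2 * \<sigma>\<^sup>2) \<le> (4 * R * \<bar>x\<bar> + R\<^sup>2) / (2 * \<sigma>\<^sup>2)"
    by (rule divide_right_mono) simp
  moreover have "gam \<sigma> \<mu> x / lower_env x = exp (((\<bar>x\<bar> + R)\<^sup>2 - (x - \<mu>)\<^sup>2) / (2 * \<sigma>\<^sup>2))"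
    using peak_pos
    by (simp add: gam_eq lower_env_def peak_def[symmetric] exp_diff[symmetric] diff_divide_distrib)
  ultimately show ?thesis by simp
qed

lemma integrable_pstar_mult_ratio_power:
  assumes "\<mu> \<in> Ms" and [measurable]: "q \<in> borel_measurable borel" and q: "\<And>x. lower_env x \<le> q x"
  shows "integrable lborel (\<lambda>x. p x * (gam \<sigma> \<mu> x / q x - 1) ^ k)"
proof -
  define G where "G x = exp ((4 * R * \<bar>x\<bar> + R\<^sup>2) / (2 * \<sigma>\<^sup>2))" for x
  have ratio: "\<bar>gam \<sigma> \<mu> x / q x - 1\<bar> \<le> G x" for x
  proof -
    have "gam \<sigma> \<mu> x / q x \<le> gam \<sigma> \<mu> x / lower_env x"
      using q[of x] lower_env_pos[of x] gam_pos[OF sigma_pos, of \<mu> x] by (intro divide_left_mono) auto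
    moreover have "1 \<le> G x" using R_nonneg sigma_pos by (simp add: G_def)
    moreover have "0 \<le> gam \<sigma> \<mu> x / q x"
      using q[of x] lower_env_pos[of x] gam_pos[OF sigma_pos, of \<mu> x] by simp
    ultimately show ?thesis
      using gam_div_lower_env_le[OF assms(1), of x] unfolding G_def by linarith
  qed
  have bound: "norm (p x * (gam \<sigma> \<mu> x / q x - 1) ^ k)
      \<le> norm (peak * exp ((R + 2 * k * R) / \<sigma>\<^sup>2 * \<bar>x\<bar> + k * R\<^sup>2 / (2 * \<sigma>\<^sup>2) - 1 / (2 * \<sigma>\<^sup>2) * x\<^sup>2))"
    for x
  proof -
    have "norm (p x * (gam \<sigma> \<mu> x / q x - 1) ^ k) \<le> upper_env x * G x ^ k"
      using pstar_le_upper_env[of x] pstar_pos[of x] ratio[of x]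
      by (auto simp: abs_mult power_abs intro!: mult_mono power_mono)
    also have "\<dots> = peak * exp ((R + 2 * k * R) / \<sigma>\<^sup>2 * \<bar>x\<bar> + k * R\<^sup>2 / (2 * \<sigma>\<^sup>2) - 1 / (2 * \<sigma>\<^sup>2) * x\<^sup>2)"
    proof -
      have "(2 * R * \<bar>x\<bar> - x\<^sup>2) / (2 * \<sigma>\<^sup>2) + k * ((4 * R * \<bar>x\<bar> + R\<^sup>2) / (2 * \<sigma>\<^sup>2))
          = (R + 2 * k * R) / \<sigma>\<^sup>2 * \<bar>x\<bar> + k * R\<^sup>2 / (2 * \<sigma>\<^sup>2) - 1 / (2 * \<sigma>\<^sup>2) * x\<^sup>2"
        using sigma_pos by (simp add: field_simps)
      then show ?thesis
        by (simp add: upper_env_def G_def exp_of_nat_mult[symmetric] mult.assoc exp_add[symmetric])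
    qed
    finally show ?thesis using peak_pos by simp
  qed
  show ?thesis
    using sigma_pos
    by (intro Bochner_Integration.integrable_bound[OF _ _ AE_I2[OF bound]]
        Bochner_Integration.integrable_mult_right integrable_exp_abs_quadratic) simp_all
qed

lemma exists_component_improving_fit:
  assumes [measurable]: "q \<in> borel_measurable borel" and q: "\<And>x. lower_env x \<le> q x"
    and q_prob: "(\<integral>\<^sup>+x. q x \<partial>lborel) = 1" and ne: "density lborel p \<noteq> density lborel q"
  obtains \<mu> where "\<mu> \<in> Ms" and "0 < (\<integral>x. p x * (gam \<sigma> \<mu> x / q x - 1) \<partial>lborel)"
proof -
  have q_pos: "0 < q x" for x using lower_env_pos q by (rule less_le_trans)
  have [measurable_cong]: "sets F = sets borel" by (rule sets_F)
  have "\<exists>\<mu>\<in>Ms. 0 < (\<integral>x. p x * (gam \<sigma> \<mu> x / q x - 1) \<partial>lborel)"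
  proof (rule ccontr)
    assume "\<not> ?thesis"
    then have le_0: "(\<integral>x. p x * (gam \<sigma> \<mu> x / q x - 1) \<partial>lborel) \<le> 0" if "\<mu> \<in> Ms" for \<mu>
      using that by auto
    have ratio_le_1: "(\<integral>\<^sup>+x. p x * (gam \<sigma> \<mu> x / q x) \<partial>lborel) \<le> 1" if "\<mu> \<in> Ms" for \<mu>
    proof -
      have split: "p x * (gam \<sigma> \<mu> x / q x) = p x * (gam \<sigma> \<mu> x / q x - 1) + p x" for x
        by (simp add: algebra_simps)
      have "has_bochner_integral lborel (\<lambda>x. p x * (gam \<sigma> \<mu> x / q x))
          ((\<integral>x. p x * (gam \<sigma> \<mu> x / q x - 1) \<partial>lborel) + 1)"
        unfolding split
        using integrable_pstar_mult_ratio_power[OF that assms(1) q, where k = 1]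
        by (intro has_bochner_integral_add has_bochner_integral_pstar) (simp add: has_bochner_integral_iff)
      then have "(\<integral>\<^sup>+x. p x * (gam \<sigma> \<mu> x / q x) \<partial>lborel)
          = (\<integral>x. p x * (gam \<sigma> \<mu> x / q x - 1) \<partial>lborel) + 1"
        using pstar_pos q_pos gam_pos[OF sigma_pos]
        by (subst nn_integral_eq_integral)
           (auto simp: has_bochner_integral_iff less_imp_le intro!: AE_I2)
      then show ?thesis using le_0[OF that] by simp
    qed
    txt \<open>Since p is the F-average of the gam \<sigma> \<mu>, Fubini turns the chi-square integral of p
      and q into the F-average of the integrals just bounded by 1.\<close>
    have "(\<integral>\<^sup>+x. ennreal (p x * p x / q x) \<partial>lborel)
        = (\<integral>\<^sup>+x. (\<integral>\<^sup>+\<mu>. p x * (gam \<sigma> \<mu> x / q x) \<partial>F) \<partial>lborel)"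
    proof (rule nn_integral_cong)
      fix x
      have "(\<integral>\<^sup>+\<mu>. p x * (gam \<sigma> \<mu> x / q x) \<partial>F) = (\<integral>\<^sup>+\<mu>. ennreal (p x / q x) * gam \<sigma> \<mu> x \<partial>F)"
        using pstar_pos[of x] q_pos[of x] by (intro nn_integral_cong) (simp add: ennreal_mult'[symmetric])
      also have "\<dots> = ennreal (p x / q x) * p x"
        by (subst nn_integral_cmult) (measurable, simp add: nn_integral_F_gam)
      finally show "ennreal (p x * p x / q x) = (\<integral>\<^sup>+\<mu>. p x * (gam \<sigma> \<mu> x / q x) \<partial>F)"
        using pstar_pos[of x] q_pos[of x] by (simp add: ennreal_mult'[symmetric])
    qed
    also have "\<dots> = (\<integral>\<^sup>+\<mu>. (\<integral>\<^sup>+x. p x * (gam \<sigma> \<mu> x / q x) \<partial>lborel) \<partial>F)"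
      by (rule lborel_F.Fubini'[symmetric]) (unfold gam_def normal_density_def, measurable)
    also have "\<dots> \<le> (\<integral>\<^sup>+\<mu>. 1 \<partial>F)"
      by (intro nn_integral_mono_AE AE_mp[OF AE_F_Ms AE_I2] impI ratio_le_1)
    also have "\<dots> = 1" by (simp add: F.emeasure_space_1)
    finally have "AE x in lborel. p x = q x"
      using pstar_pos q_pos nn_integral_pstar q_prob
      by (intro AE_eq_if_nn_integral_square_div_le_1) (auto simp: less_imp_le)
    then have "density lborel p = density lborel q"
      by (intro density_cong) auto
    with ne show False ..
  qed
  then show ?thesis using that by blast
qed

lemma loglik_add_component_ge:
  assumes K: "1 \<le> K" and \<theta>: "(w, m) \<in> Theta Ms K" and \<theta>': "(w', m') \<in> Theta Ms (Suc K)"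
    and \<mu>: "\<mu> \<in> Ms" and t: "0 \<le> t" "t \<le> 1/2"
    and mix': "\<And>x. mix_density \<sigma> (Suc K) w' m' x = (1 - t) * mix_density \<sigma> K w m x + t * gam \<sigma> \<mu> x"
  shows "t * (\<integral>x. p x * (gam \<sigma> \<mu> x / mix_density \<sigma> K w m x - 1) \<partial>lborel)
      - 2 * t\<^sup>2 * (\<integral>x. p x * (gam \<sigma> \<mu> x / mix_density \<sigma> K w m x - 1)\<^sup>2 \<partial>lborel)
    \<le> loglik (Suc K) w' m' - loglik K w m"
proof -
  define q where "q = mix_density \<sigma> K w m"
  define r where "r x = gam \<sigma> \<mu> x / q x - 1" for x
  have int: "integrable lborel (\<lambda>x. p x * r x ^ k)" for k
    unfolding r_def q_def using lower_env_le_mix_density[OF K \<theta>]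
    by (intro integrable_pstar_mult_ratio_power[OF \<mu>]) simp_all
  have linear: "p x * (t * r x - 2 * t\<^sup>2 * (r x)\<^sup>2) = t * (p x * r x ^ 1) - 2 * t\<^sup>2 * (p x * r x ^ 2)"
    for x by (simp add: algebra_simps)
  have "t * (\<integral>x. p x * r x \<partial>lborel) - 2 * t\<^sup>2 * (\<integral>x. p x * (r x)\<^sup>2 \<partial>lborel)
      = (\<integral>x. p x * (t * r x - 2 * t\<^sup>2 * (r x)\<^sup>2) \<partial>lborel)"
    unfolding linear using int[of 1] int[of 2] by (subst Bochner_Integration.integral_diff) auto
  also have "\<dots> \<le> (\<integral>x. p x * ln (mix_density \<sigma> (Suc K) w' m' x) - p x * ln (q x) \<partial>lborel)"
  proof (rule integral_mono)
    show "integrable lborel (\<lambda>x. p x * (t * r x - 2 * t\<^sup>2 * (r x)\<^sup>2))"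
      unfolding linear using int[of 1] int[of 2] by simp
    show "integrable lborel (\<lambda>x. p x * ln (mix_density \<sigma> (Suc K) w' m' x) - p x * ln (q x))"
      unfolding q_def using K \<theta> \<theta>'
      by (intro Bochner_Integration.integrable_diff integrable_pstar_mult_ln_mix_density) auto
    fix x
    have "t * r x - 2 * t\<^sup>2 * (r x)\<^sup>2 \<le> ln (mix_density \<sigma> (Suc K) w' m' x) - ln (q x)"
      unfolding mix' r_def q_def
      using mix_density_pos[OF K \<theta>] gam_pos[OF sigma_pos] t
      by (intro ln_add_component_ge) (auto simp: less_imp_le)
    then show "p x * (t * r x - 2 * t\<^sup>2 * (r x)\<^sup>2) \<le> p x * ln (mix_density \<sigma> (Suc K) w' m' x) - p x * ln (q x)"
      using pstar_pos[of x] by (simp add: right_diff_distrib[symmetric])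
  qed
  also have "\<dots> = loglik (Suc K) w' m' - loglik K w m"
    unfolding loglik_def q_def using K \<theta> \<theta>'
    by (intro Bochner_Integration.integral_diff integrable_pstar_mult_ln_mix_density) auto
  finally show ?thesis by (simp add: r_def q_def)
qed

lemma loglik_strict_increase:
  assumes K: "1 \<le> K" and \<theta>: "(w, m) \<in> Theta Ms K"
    and ne: "density lborel p \<noteq> density lborel (mix_density \<sigma> K w m)"
  obtains w' m' where "(w', m') \<in> Theta Ms (Suc K)" and "loglik K w m < loglik (Suc K) w' m'"
proof -
  obtain \<mu> where \<mu>: "\<mu> \<in> Ms"
    and D_pos: "0 < (\<integral>x. p x * (gam \<sigma> \<mu> x / mix_density \<sigma> K w m x - 1) \<partial>lborel)"
    using exists_component_improving_fit[OF _ lower_env_le_mix_density[OF K \<theta>]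
        nn_integral_mix_density[OF K \<theta>] ne] by auto
  define D where "D = (\<integral>x. p x * (gam \<sigma> \<mu> x / mix_density \<sigma> K w m x - 1) \<partial>lborel)"
  define V where "V = (\<integral>x. p x * (gam \<sigma> \<mu> x / mix_density \<sigma> K w m x - 1)\<^sup>2 \<partial>lborel)"
  have "0 \<le> V"
    unfolding V_def using pstar_pos by (intro integral_nonneg_AE AE_I2) (simp add: less_imp_le)
  define t where "t = min (1/2) (D / (4 * V + 1))"
  have "0 < D" unfolding D_def by (rule D_pos)
  then have "0 < t"
    using \<open>0 \<le> V\<close> unfolding t_def min_less_iff_conj by simp
  moreover have "t \<le> 1/2"
    unfolding t_def by (rule min.cobounded1)
  ultimately have t: "0 < t" "t \<le> 1/2" by auto
  obtain w' m' where \<theta>': "(w', m') \<in> Theta Ms (Suc K)"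
    and mix': "\<And>x. mix_density \<sigma> (Suc K) w' m' x = (1 - t) * mix_density \<sigma> K w m x + t * gam \<sigma> \<mu> x"
    using mix_density_Suc_add_component[OF K \<theta> \<mu>, of t] t by auto
  have "t \<le> D / (4 * V + 1)"
    unfolding t_def by (rule min.cobounded2)
  then have "t * (4 * V + 1) \<le> D"
    using \<open>0 \<le> V\<close> by (subst (asm) pos_le_divide_eq) auto
  moreover have "t * (4 * V + 1) = 4 * (t * V) + t" by (simp add: algebra_simps)
  moreover have "0 \<le> t * V" using t \<open>0 \<le> V\<close> by simp
  ultimately have "0 < t * (D - 2 * (t * V))"
    using t by (intro mult_pos_pos) linarith+
  also have "t * (D - 2 * (t * V)) = t * D - 2 * t\<^sup>2 * V"
    by (simp add: power2_eq_square algebra_simps)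
  also have "\<dots> \<le> loglik (Suc K) w' m' - loglik K w m"
    unfolding D_def V_def using t by (intro loglik_add_component_ge[OF K \<theta> \<theta>' \<mu> _ _ mix']) auto
  finally show ?thesis using that[OF \<theta>'] by simp
qed

lemma rel_entropy_set_Suc_less:
  assumes K: "1 \<le> K" and notin: "density lborel p \<notin> Pi_model \<sigma> Ms K"
  shows "rel_entropy_set (density lborel p) (Pi_model \<sigma> Ms (Suc K))
    < rel_entropy_set (density lborel p) (Pi_model \<sigma> Ms K)"
proof -
  define E where "E = (\<integral>x. p x * ln (p x) \<partial>lborel)"
  obtain w m where \<theta>: "(w, m) \<in> Theta Ms K"
    and best: "\<And>w' m'. (w', m') \<in> Theta Ms K \<Longrightarrow> loglik K w' m' \<le> loglik K w m"
    using loglik_attains_max[OF K] by blast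
  have "density lborel (mix_density \<sigma> K w m) \<in> Pi_model \<sigma> Ms K"
    unfolding Pi_model_def using \<theta> by blast
  then have "density lborel p \<noteq> density lborel (mix_density \<sigma> K w m)"
    using notin by auto
  then obtain w' m' where \<theta>': "(w', m') \<in> Theta Ms (Suc K)" and less: "loglik K w m < loglik (Suc K) w' m'"
    using loglik_strict_increase[OF K \<theta>] by blast
  have "rel_entropy_set (density lborel p) (Pi_model \<sigma> Ms (Suc K))
      \<le> rel_entropy (density lborel p) (density lborel (mix_density \<sigma> (Suc K) w' m'))"
    unfolding rel_entropy_set_def Pi_model_def using \<theta>' by (intro INF_lower) blast
  also have "\<dots> = ereal (E - loglik (Suc K) w' m')"
    unfolding E_def using K \<theta>' by (intro rel_entropy_mix_density) auto
  also have "\<dots> < ereal (E - loglik K w m)"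
    using less by simp
  also have "\<dots> \<le> rel_entropy_set (density lborel p) (Pi_model \<sigma> Ms K)"
    unfolding rel_entropy_set_def
  proof (rule INF_greatest)
    fix Q assume "Q \<in> Pi_model \<sigma> Ms K"
    then obtain w' m' where "Q = density lborel (mix_density \<sigma> K w' m')" and "(w', m') \<in> Theta Ms K"
      unfolding Pi_model_def by blast
    then show "ereal (E - loglik K w m) \<le> rel_entropy (density lborel p) Q"
      using best unfolding E_def by (simp add: rel_entropy_mix_density[OF K])
  qed
  finally show ?thesis .
qed

end

theorem proposition1:
  fixes \<sigma> :: real and Ms :: "real set" and F :: "real measure" and K :: nat
  assumes "\<sigma> > 0" and "compact Ms"
    and "prob_space F" and "sets F = sets borel" and "emeasure F Ms = 1"
    and "K \<ge> 1"
    and "density lborel (pstar \<sigma> F) \<notin> Pi_model \<sigma> Ms K"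
  shows "rel_entropy_set (density lborel (pstar \<sigma> F)) (Pi_model \<sigma> Ms (Suc K))
         < rel_entropy_set (density lborel (pstar \<sigma> F)) (Pi_model \<sigma> Ms K)"
proof -
  obtain R where "\<forall>\<mu>\<in>Ms. \<bar>\<mu>\<bar> \<le> R"
    using compact_imp_bounded[OF assms(2)] unfolding bounded_real by blast
  then interpret location_mixture \<sigma> R Ms F
    using assms by (intro location_mixture.intro) simp_all
  show ?thesis using assms(6,7) by (rule rel_entropy_set_Suc_less)
qed

end
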